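(* The variety $\mathcal{WHB}$ of WHB-algebras has the amalgamation property: for all WHB-algebras $\mathbf A,\mathbf B,\mathbf C$ and injective homomorphisms $i\colon\mathbf A\to\mathbf B$, $j\colon\mathbf A\to\mathbf C$, there exist a WHB-algebra $\mathbf D$ and injective homomorphisms $h\colon\mathbf B\to\mathbf D$, $k\colon\mathbf C\to\mathbf D$ with $h\circ i=k\circ j$.
   Context: A WHB-algebra is an algebra $(A,\wedge,\vee,\to,\leftarrow,0,1)$ such that $(A,\wedge,\vee,0,1)$ is a bounded distributive lattice and for all $a,b,c\in A$: $a\to a=1$; $a\to(b\wedge c)=(a\to b)\wedge(a\to c)$; $(a\vee b)\to c=(a\to c)\wedge(b\to c)$; $(a\to b)\wedge(b\to c)\le a\to c$; $a\leftarrow a=0$; $(a\vee b)\leftarrow c=(a\leftarrow c)\vee(b\leftarrow c)$; $a\leftarrow(b\wedge c)=(a\leftarrow b)\vee(a\leftarrow c)$; $a\leftarrow c\le(a\leftarrow b)\vee(b\leftarrow c)$; $a\wedge((a\to b)\leftarrow 0)\le b$; $a\le b\vee(1\to(a\leftarrow b))$. *)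

theory Defs
  imports Main
begin

record 'a whb_alg =
  carrier :: "'a set"
  meet :: "'a \<Rightarrow> 'a \<Rightarrow> 'a"
  join :: "'a \<Rightarrow> 'a \<Rightarrow> 'a"
  imp :: "'a \<Rightarrow> 'a \<Rightarrow> 'a"
  coimp :: "'a \<Rightarrow> 'a \<Rightarrow> 'a"
  bot :: "'a"
  top :: "'a"

definition leq :: "('a, 'm) whb_alg_scheme \<Rightarrow> 'a \<Rightarrow> 'a \<Rightarrow> bool" where
  "leq A a b \<longleftrightarrow> meet A a b = a"

definition whb_algebra :: "('a, 'm) whb_alg_scheme \<Rightarrow> bool" where
  "whb_algebra A \<longleftrightarrow>
    \<comment> \<open>closure of the carrier under the operations\<close>
    bot A \<in> carrier A \<and> top A \<in> carrier A \<and>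
    (\<forall>a\<in>carrier A. \<forall>b\<in>carrier A.
       meet A a b \<in> carrier A \<and> join A a b \<in> carrier A \<and>
       imp A a b \<in> carrier A \<and> coimp A a b \<in> carrier A) \<and>
    \<comment> \<open>bounded distributive lattice\<close>
    (\<forall>a\<in>carrier A. \<forall>b\<in>carrier A. \<forall>c\<in>carrier A.
       meet A a (meet A b c) = meet A (meet A a b) c \<and>
       join A a (join A b c) = join A (join A a b) c \<and>
       meet A a b = meet A b a \<and> join A a b = join A b a \<and>
       meet A a (join A a b) = a \<and> join A a (meet A a b) = a \<and>
       meet A a (join A b c) = join A (meet A a b) (meet A a c) \<and>
       meet A a (bot A) = bot A \<and> join A a (top A) = top A) \<and>
    \<comment> \<open>WHB axioms\<close>
    (\<forall>a\<in>carrier A. \<forall>b\<in>carrier A. \<forall>c\<in>carrier A.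
       imp A a a = top A \<and>
       imp A a (meet A b c) = meet A (imp A a b) (imp A a c) \<and>
       imp A (join A a b) c = meet A (imp A a c) (imp A b c) \<and>
       leq A (meet A (imp A a b) (imp A b c)) (imp A a c) \<and>
       coimp A a a = bot A \<and>
       coimp A (join A a b) c = join A (coimp A a c) (coimp A b c) \<and>
       coimp A a (meet A b c) = join A (coimp A a b) (coimp A a c) \<and>
       leq A (coimp A a c) (join A (coimp A a b) (coimp A b c)) \<and>
       leq A (meet A a (coimp A (imp A a b) (bot A))) b \<and>
       leq A a (join A b (imp A (top A) (coimp A a b))))"

definition whb_hom ::
  "('a, 'm) whb_alg_scheme \<Rightarrow> ('b, 'n) whb_alg_scheme \<Rightarrow> ('a \<Rightarrow> 'b) \<Rightarrow> bool" where
  "whb_hom A B f \<longleftrightarrow>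
    (\<forall>a\<in>carrier A. f a \<in> carrier B) \<and>
    f (bot A) = bot B \<and> f (top A) = top B \<and>
    (\<forall>a\<in>carrier A. \<forall>b\<in>carrier A.
       f (meet A a b) = meet B (f a) (f b) \<and>
       f (join A a b) = join B (f a) (f b) \<and>
       f (imp A a b) = imp B (f a) (f b) \<and>
       f (coimp A a b) = coimp B (f a) (f b))"

definition whb_emb ::
  "('a, 'm) whb_alg_scheme \<Rightarrow> ('b, 'n) whb_alg_scheme \<Rightarrow> ('a \<Rightarrow> 'b) \<Rightarrow> bool" where
  "whb_emb A B f \<longleftrightarrow> whb_hom A B f \<and> inj_on f (carrier A)"

end

theory Submission
  imports Defs
begin

text \<open>
  The prime filters of a WHB-algebra \<open>L\<close>, related by \<open>P R P'\<close> iff \<open>a \<rightarrow> b \<in> P\<close> and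
  \<open>a \<in> P'\<close> always give \<open>b \<in> P'\<close>, form a frame, and \<open>a \<mapsto> {P. a \<in> P}\<close> embeds \<open>L\<close> into
  the complex algebra of that frame, where \<open>\<rightarrow>\<close> is read along \<open>R\<close> and \<open>\<leftarrow>\<close> along its
  converse. Everything rests on one prime filter theorem: for a relation \<open>S\<close> compatible with the
  lattice operations, a filter and an ideal that are \<open>S\<close>-separated extend to a prime filter
  disjoint from the ideal and closed under \<open>S\<close>; choosing \<open>S\<close> to be \<open>\<le>\<close>, \<open>x \<rightarrow> y \<in> P\<close> or
  \<open>x \<leftarrow> y \<notin> P\<close> yields separation, the representation of \<open>\<rightarrow>\<close> and that of \<open>\<leftarrow>\<close>, and it also
  shows that the dual \<open>P \<mapsto> i\<inverse>(P)\<close> of an embedding \<open>i\<close> is a surjective bounded morphism.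

  For the amalgam, take the pullback of the duals of \<open>i\<close> and \<open>j\<close> with the product relation. Its
  projections are again surjective bounded morphisms, so inverse images along them embed \<open>B\<close> and
  \<open>C\<close> into its complex algebra, and the two embeddings agree on \<open>A\<close> by construction. The
  subalgebra generated by both images is carried by reverse Polish words over \<open>B + C\<close> and
  operation symbols, which fits the prescribed carrier type.
\<close>

section \<open>Complex algebras of frames\<close>

definition frame_imp :: "'w set \<Rightarrow> ('w \<Rightarrow> 'w \<Rightarrow> bool) \<Rightarrow> 'w set \<Rightarrow> 'w set \<Rightarrow> 'w set" where
  "frame_imp W R U V = {w \<in> W. \<forall>w'\<in>W. R w w' \<longrightarrow> w' \<in> U \<longrightarrow> w' \<in> V}"

definition frame_coimp :: "'w set \<Rightarrow> ('w \<Rightarrow> 'w \<Rightarrow> bool) \<Rightarrow> 'w set \<Rightarrow> 'w set \<Rightarrow> 'w set" where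
  "frame_coimp W R U V = {w \<in> W. \<exists>w'\<in>W. R w' w \<and> w' \<in> U \<and> w' \<notin> V}"

lemma frame_imp_refl: "frame_imp W R U U = W"
  unfolding frame_imp_def by blast

lemma frame_imp_Int: "frame_imp W R U (V \<inter> V') = frame_imp W R U V \<inter> frame_imp W R U V'"
  unfolding frame_imp_def by blast

lemma frame_imp_Un: "frame_imp W R (U \<union> U') V = frame_imp W R U V \<inter> frame_imp W R U' V"
  unfolding frame_imp_def by blast

lemma frame_imp_trans: "frame_imp W R U V \<inter> frame_imp W R V V' \<subseteq> frame_imp W R U V'"
  unfolding frame_imp_def by blast

lemma frame_coimp_refl: "frame_coimp W R U U = {}"
  unfolding frame_coimp_def by blast

lemma frame_coimp_Un: "frame_coimp W R (U \<union> U') V = frame_coimp W R U V \<union> frame_coimp W R U' V"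
  unfolding frame_coimp_def by blast

lemma frame_coimp_Int: "frame_coimp W R U (V \<inter> V') = frame_coimp W R U V \<union> frame_coimp W R U V'"
  unfolding frame_coimp_def by blast

lemma frame_coimp_trans: "frame_coimp W R U V' \<subseteq> frame_coimp W R U V \<union> frame_coimp W R V V'"
  unfolding frame_coimp_def by blast

lemma Int_frame_coimp_frame_imp_subset: "U \<inter> frame_coimp W R (frame_imp W R U V) {} \<subseteq> V"
  unfolding frame_coimp_def frame_imp_def by blast

lemma subset_Un_frame_imp_frame_coimp: "U \<subseteq> W \<Longrightarrow> U \<subseteq> V \<union> frame_imp W R W (frame_coimp W R U V)"
  unfolding frame_coimp_def frame_imp_def by blast

definition bounded_morphism ::
  "'v set \<Rightarrow> ('v \<Rightarrow> 'v \<Rightarrow> bool) \<Rightarrow> 'w set \<Rightarrow> ('w \<Rightarrow> 'w \<Rightarrow> bool) \<Rightarrow> ('v \<Rightarrow> 'w) \<Rightarrow> bool" where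
  "bounded_morphism V S W R p \<longleftrightarrow> p ` V \<subseteq> W \<and>
     (\<forall>v\<in>V. \<forall>v'\<in>V. S v v' \<longrightarrow> R (p v) (p v')) \<and>
     (\<forall>v\<in>V. \<forall>w\<in>W. R (p v) w \<longrightarrow> (\<exists>v'\<in>V. S v v' \<and> p v' = w)) \<and>
     (\<forall>v\<in>V. \<forall>w\<in>W. R w (p v) \<longrightarrow> (\<exists>v'\<in>V. S v' v \<and> p v' = w))"

lemma
  assumes "bounded_morphism V S W R p"
  shows bounded_morphism_image: "v \<in> V \<Longrightarrow> p v \<in> W"
    and bounded_morphism_forth: "v \<in> V \<Longrightarrow> v' \<in> V \<Longrightarrow> S v v' \<Longrightarrow> R (p v) (p v')"
    and bounded_morphism_back:
      "v \<in> V \<Longrightarrow> w \<in> W \<Longrightarrow> R (p v) w \<Longrightarrow> \<exists>v'\<in>V. S v v' \<and> p v' = w"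
    and bounded_morphism_back_converse:
      "v \<in> V \<Longrightarrow> w \<in> W \<Longrightarrow> R w (p v) \<Longrightarrow> \<exists>v'\<in>V. S v' v \<and> p v' = w"
  using assms unfolding bounded_morphism_def by blast+

lemma vimage_frame_imp:
  assumes p: "bounded_morphism V S W R p"
  shows "V \<inter> p -` frame_imp W R U U' = frame_imp V S (V \<inter> p -` U) (V \<inter> p -` U')"
proof (intro set_eqI iffI)
  fix v assume "v \<in> V \<inter> p -` frame_imp W R U U'"
  then show "v \<in> frame_imp V S (V \<inter> p -` U) (V \<inter> p -` U')"
    using bounded_morphism_image[OF p] bounded_morphism_forth[OF p] by (simp add: frame_imp_def)
next
  fix v assume v: "v \<in> frame_imp V S (V \<inter> p -` U) (V \<inter> p -` U')"
  have "w \<in> U'" if w: "w \<in> W" "R (p v) w" "w \<in> U" for w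
  proof -
    obtain v' where "v' \<in> V" "S v v'" "p v' = w"
      using bounded_morphism_back[OF p _ w(1,2)] v by (auto simp: frame_imp_def)
    then show ?thesis using v w(3) by (auto simp: frame_imp_def)
  qed
  then show "v \<in> V \<inter> p -` frame_imp W R U U'"
    using v bounded_morphism_image[OF p] by (simp add: frame_imp_def)
qed

lemma vimage_frame_coimp:
  assumes p: "bounded_morphism V S W R p"
  shows "V \<inter> p -` frame_coimp W R U U' = frame_coimp V S (V \<inter> p -` U) (V \<inter> p -` U')"
proof (intro set_eqI iffI)
  fix v assume v: "v \<in> V \<inter> p -` frame_coimp W R U U'"
  then obtain w where w: "w \<in> W" "R w (p v)" "w \<in> U" "w \<notin> U'"
    by (auto simp: frame_coimp_def)
  obtain v' where "v' \<in> V" "S v' v" "p v' = w"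
    using bounded_morphism_back_converse[OF p _ w(1,2)] v by blast
  then show "v \<in> frame_coimp V S (V \<inter> p -` U) (V \<inter> p -` U')"
    using v w by (auto simp: frame_coimp_def)
next
  fix v assume "v \<in> frame_coimp V S (V \<inter> p -` U) (V \<inter> p -` U')"
  then show "v \<in> V \<inter> p -` frame_coimp W R U U'"
    using bounded_morphism_image[OF p] bounded_morphism_forth[OF p] by (auto simp: frame_coimp_def)
qed

definition pullback :: "'x set \<Rightarrow> 'y set \<Rightarrow> ('x \<Rightarrow> 'v) \<Rightarrow> ('y \<Rightarrow> 'v) \<Rightarrow> ('x \<times> 'y) set" where
  "pullback X Y f g = {(x, y). x \<in> X \<and> y \<in> Y \<and> f x = g y}"

lemma bounded_morphism_pullback_fst:
  assumes f: "bounded_morphism X RX V RV f" and g: "bounded_morphism Y RY V RV g"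
  shows "bounded_morphism (pullback X Y f g) (rel_prod RX RY) X RX fst"
  unfolding bounded_morphism_def
proof (intro conjI ballI impI)
  fix v x' assume v: "v \<in> pullback X Y f g" and x': "x' \<in> X"
  obtain x y where xy: "v = (x, y)" "x \<in> X" "y \<in> Y" "f x = g y"
    using v unfolding pullback_def by blast
  show "\<exists>v'\<in>pullback X Y f g. rel_prod RX RY v v' \<and> fst v' = x'" if "RX (fst v) x'"
  proof -
    have "RV (g y) (f x')" using bounded_morphism_forth[OF f xy(2) x'] that xy by simp
    then obtain y' where "y' \<in> Y" "RY y y'" "g y' = f x'"
      using bounded_morphism_back[OF g xy(3) bounded_morphism_image[OF f x']] by blast
    then show ?thesis using xy x' that by (intro bexI[of _ "(x', y')"]) (auto simp: pullback_def)
  qed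
  show "\<exists>v'\<in>pullback X Y f g. rel_prod RX RY v' v \<and> fst v' = x'" if "RX x' (fst v)"
  proof -
    have "RV (f x') (g y)" using bounded_morphism_forth[OF f x' xy(2)] that xy by simp
    then obtain y' where "y' \<in> Y" "RY y' y" "g y' = f x'"
      using bounded_morphism_back_converse[OF g xy(3) bounded_morphism_image[OF f x']] by blast
    then show ?thesis using xy x' that by (intro bexI[of _ "(x', y')"]) (auto simp: pullback_def)
  qed
qed (auto simp: pullback_def rel_prod_sel)

lemma bounded_morphism_pullback_snd:
  assumes f: "bounded_morphism X RX V RV f" and g: "bounded_morphism Y RY V RV g"
  shows "bounded_morphism (pullback X Y f g) (rel_prod RX RY) Y RY snd"
  unfolding bounded_morphism_def
proof (intro conjI ballI impI)
  fix v y' assume v: "v \<in> pullback X Y f g" and y': "y' \<in> Y"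
  obtain x y where xy: "v = (x, y)" "x \<in> X" "y \<in> Y" "f x = g y"
    using v unfolding pullback_def by blast
  show "\<exists>v'\<in>pullback X Y f g. rel_prod RX RY v v' \<and> snd v' = y'" if "RY (snd v) y'"
  proof -
    have "RV (f x) (g y')" using bounded_morphism_forth[OF g xy(3) y'] that xy by simp
    then obtain x' where "x' \<in> X" "RX x x'" "f x' = g y'"
      using bounded_morphism_back[OF f xy(2) bounded_morphism_image[OF g y']] by blast
    then show ?thesis using xy y' that by (intro bexI[of _ "(x', y')"]) (auto simp: pullback_def)
  qed
  show "\<exists>v'\<in>pullback X Y f g. rel_prod RX RY v' v \<and> snd v' = y'" if "RY y' (snd v)"
  proof -
    have "RV (g y') (f x)" using bounded_morphism_forth[OF g y' xy(3)] that xy by simp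
    then obtain x' where "x' \<in> X" "RX x' x" "f x' = g y'"
      using bounded_morphism_back_converse[OF f xy(2) bounded_morphism_image[OF g y']] by blast
    then show ?thesis using xy y' that by (intro bexI[of _ "(x', y')"]) (auto simp: pullback_def)
  qed
qed (auto simp: pullback_def rel_prod_sel)

lemma fst_pullback: "f ` X \<subseteq> g ` Y \<Longrightarrow> fst ` pullback X Y f g = X"
  unfolding pullback_def by (force simp: image_iff)

lemma snd_pullback: "g ` Y \<subseteq> f ` X \<Longrightarrow> snd ` pullback X Y f g = Y"
  unfolding pullback_def by (force simp: image_iff)

definition frame_embedding ::
  "'w set \<Rightarrow> ('w \<Rightarrow> 'w \<Rightarrow> bool) \<Rightarrow> ('a, 'm) whb_alg_scheme \<Rightarrow> ('a \<Rightarrow> 'w set) \<Rightarrow> bool" where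
  "frame_embedding W R L g \<longleftrightarrow> inj_on g (carrier L) \<and> (\<forall>a\<in>carrier L. g a \<subseteq> W) \<and>
     g (bot L) = {} \<and> g (top L) = W \<and>
     (\<forall>a\<in>carrier L. \<forall>b\<in>carrier L.
        g (meet L a b) = g a \<inter> g b \<and> g (join L a b) = g a \<union> g b \<and>
        g (imp L a b) = frame_imp W R (g a) (g b) \<and> g (coimp L a b) = frame_coimp W R (g a) (g b))"

lemma frame_embedding_vimage:
  assumes g: "frame_embedding W R L g" and p: "bounded_morphism V S W R p" and surj: "p ` V = W"
  shows "frame_embedding V S L (\<lambda>a. V \<inter> p -` g a)"
proof -
  have image_vimage: "p ` (V \<inter> p -` U) = U" if "U \<subseteq> W" for U
    using that surj by auto
  have "inj_on (\<lambda>a. V \<inter> p -` g a) (carrier L)"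
  proof (rule inj_onI)
    fix a b assume ab: "a \<in> carrier L" "b \<in> carrier L" and "V \<inter> p -` g a = V \<inter> p -` g b"
    then have "g a = g b" using image_vimage g unfolding frame_embedding_def by metis
    then show "a = b" using g ab unfolding frame_embedding_def inj_on_def by blast
  qed
  moreover have "V \<inter> p -` W = V" using surj by auto
  ultimately show ?thesis
    using g unfolding frame_embedding_def
    by (simp add: vimage_frame_imp[OF p] vimage_frame_coimp[OF p] vimage_Int vimage_Un Int_Un_distrib)
      blast
qed

section \<open>The lattice order of a WHB-algebra\<close>

locale whb =
  fixes L :: "('a, 'm) whb_alg_scheme"
  assumes whb_algebra: "whb_algebra L"
begin

abbreviation K :: "'a set" where "K \<equiv> carrier L"

lemma
  shows bot_closed [simp]: "bot L \<in> K"
    and top_closed [simp]: "top L \<in> K"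
    and meet_closed [simp]: "a \<in> K \<Longrightarrow> b \<in> K \<Longrightarrow> meet L a b \<in> K"
    and join_closed [simp]: "a \<in> K \<Longrightarrow> b \<in> K \<Longrightarrow> join L a b \<in> K"
    and imp_closed [simp]: "a \<in> K \<Longrightarrow> b \<in> K \<Longrightarrow> imp L a b \<in> K"
    and coimp_closed [simp]: "a \<in> K \<Longrightarrow> b \<in> K \<Longrightarrow> coimp L a b \<in> K"
  using whb_algebra unfolding whb_algebra_def by blast+

lemma
  assumes "a \<in> K" "b \<in> K" "c \<in> K"
  shows meet_assoc: "meet L a (meet L b c) = meet L (meet L a b) c"
    and join_assoc: "join L a (join L b c) = join L (join L a b) c"
    and meet_join_distrib: "meet L a (join L b c) = join L (meet L a b) (meet L a c)"
    and imp_meet: "imp L a (meet L b c) = meet L (imp L a b) (imp L a c)"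
    and imp_join: "imp L (join L a b) c = meet L (imp L a c) (imp L b c)"
    and imp_trans: "leq L (meet L (imp L a b) (imp L b c)) (imp L a c)"
    and coimp_join: "coimp L (join L a b) c = join L (coimp L a c) (coimp L b c)"
    and coimp_meet: "coimp L a (meet L b c) = join L (coimp L a b) (coimp L a c)"
    and coimp_trans: "leq L (coimp L a c) (join L (coimp L a b) (coimp L b c))"
  using whb_algebra assms unfolding whb_algebra_def by blast+

lemma
  assumes "a \<in> K" "b \<in> K"
  shows meet_comm: "meet L a b = meet L b a"
    and join_comm: "join L a b = join L b a"
    and meet_join_absorb: "meet L a (join L a b) = a"
    and join_meet_absorb: "join L a (meet L a b) = a"
    and meet_bot: "meet L a (bot L) = bot L"
    and join_top: "join L a (top L) = top L"
    and meet_coimp_imp_bot: "leq L (meet L a (coimp L (imp L a b) (bot L))) b"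
    and leq_join_imp_top_coimp: "leq L a (join L b (imp L (top L) (coimp L a b)))"
  using whb_algebra assms unfolding whb_algebra_def by blast+

lemma imp_refl: "a \<in> K \<Longrightarrow> imp L a a = top L"
  and coimp_refl: "a \<in> K \<Longrightarrow> coimp L a a = bot L"
  using whb_algebra unfolding whb_algebra_def by blast+

lemma meet_idem: "a \<in> K \<Longrightarrow> meet L a a = a"
  using meet_join_absorb[of a "meet L a a"] join_meet_absorb[of a a] by simp

lemma leq_refl: "a \<in> K \<Longrightarrow> leq L a a"
  by (simp add: leq_def meet_idem)

lemma leq_trans: "a \<in> K \<Longrightarrow> b \<in> K \<Longrightarrow> c \<in> K \<Longrightarrow> leq L a b \<Longrightarrow> leq L b c \<Longrightarrow> leq L a c"
  unfolding leq_def using meet_assoc[of a b c] by simp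

lemma leq_antisym: "a \<in> K \<Longrightarrow> b \<in> K \<Longrightarrow> leq L a b \<Longrightarrow> leq L b a \<Longrightarrow> a = b"
  unfolding leq_def using meet_comm[of a b] by simp

lemma meet_leq1: "a \<in> K \<Longrightarrow> b \<in> K \<Longrightarrow> leq L (meet L a b) a"
  unfolding leq_def using meet_assoc[of a b a] meet_comm[of b a] meet_assoc[of a a b] meet_idem[of a]
  by simp

lemma meet_leq2: "a \<in> K \<Longrightarrow> b \<in> K \<Longrightarrow> leq L (meet L a b) b"
  using meet_comm[of a b] meet_leq1[of b a] by simp

lemma leq_meetI: "a \<in> K \<Longrightarrow> b \<in> K \<Longrightarrow> c \<in> K \<Longrightarrow> leq L c a \<Longrightarrow> leq L c b \<Longrightarrow> leq L c (meet L a b)"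
  unfolding leq_def using meet_assoc[of c a b] by simp

lemma leq_iff_join_eq: "a \<in> K \<Longrightarrow> b \<in> K \<Longrightarrow> leq L a b \<longleftrightarrow> join L a b = b"
  unfolding leq_def
  by (metis meet_join_absorb join_meet_absorb join_comm meet_comm)

lemma leq_join1: "a \<in> K \<Longrightarrow> b \<in> K \<Longrightarrow> leq L a (join L a b)"
  unfolding leq_def by (simp add: meet_join_absorb)

lemma leq_join2: "a \<in> K \<Longrightarrow> b \<in> K \<Longrightarrow> leq L b (join L a b)"
  using join_comm[of a b] leq_join1[of b a] by simp

lemma join_leqI: "a \<in> K \<Longrightarrow> b \<in> K \<Longrightarrow> c \<in> K \<Longrightarrow> leq L a c \<Longrightarrow> leq L b c \<Longrightarrow> leq L (join L a b) c"
  using leq_iff_join_eq[of a c] leq_iff_join_eq[of b c] leq_iff_join_eq[of "join L a b" c]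
    join_assoc[of a b c]
  by simp

lemma bot_leq: "a \<in> K \<Longrightarrow> leq L (bot L) a"
  unfolding leq_def using meet_bot[of a] meet_comm[of a "bot L"] by simp

lemma leq_top: "a \<in> K \<Longrightarrow> leq L a (top L)"
  using join_top[of a] leq_iff_join_eq[of a "top L"] by simp

lemma meet_mono:
  "a \<in> K \<Longrightarrow> b \<in> K \<Longrightarrow> a' \<in> K \<Longrightarrow> b' \<in> K \<Longrightarrow> leq L a a' \<Longrightarrow> leq L b b' \<Longrightarrow>
    leq L (meet L a b) (meet L a' b')"
  by (meson leq_meetI leq_trans meet_closed meet_leq1 meet_leq2)

lemma join_mono:
  "a \<in> K \<Longrightarrow> b \<in> K \<Longrightarrow> a' \<in> K \<Longrightarrow> b' \<in> K \<Longrightarrow> leq L a a' \<Longrightarrow> leq L b b' \<Longrightarrow>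
    leq L (join L a b) (join L a' b')"
  by (meson join_leqI leq_trans join_closed leq_join1 leq_join2)

lemma imp_antimono: "a \<in> K \<Longrightarrow> a' \<in> K \<Longrightarrow> b \<in> K \<Longrightarrow> leq L a' a \<Longrightarrow> leq L (imp L a b) (imp L a' b)"
  using imp_join[of a' a b] leq_iff_join_eq[of a' a] meet_leq1[of "imp L a' b" "imp L a b"] by simp

lemma imp_mono: "a \<in> K \<Longrightarrow> b \<in> K \<Longrightarrow> b' \<in> K \<Longrightarrow> leq L b b' \<Longrightarrow> leq L (imp L a b) (imp L a b')"
  using imp_meet[of a b b'] meet_leq2[of "imp L a b" "imp L a b'"] unfolding leq_def by simp

lemma imp_leq_imp:
  "a \<in> K \<Longrightarrow> b \<in> K \<Longrightarrow> a' \<in> K \<Longrightarrow> b' \<in> K \<Longrightarrow> leq L a' a \<Longrightarrow> leq L b b' \<Longrightarrow>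
    leq L (imp L a b) (imp L a' b')"
  by (meson imp_antimono imp_closed imp_mono leq_trans)

lemma coimp_mono: "a \<in> K \<Longrightarrow> a' \<in> K \<Longrightarrow> b \<in> K \<Longrightarrow> leq L a a' \<Longrightarrow> leq L (coimp L a b) (coimp L a' b)"
  using coimp_join[of a a' b] leq_iff_join_eq[of a a'] leq_join1[of "coimp L a b" "coimp L a' b"] by simp

lemma coimp_antimono: "a \<in> K \<Longrightarrow> b \<in> K \<Longrightarrow> b' \<in> K \<Longrightarrow> leq L b' b \<Longrightarrow> leq L (coimp L a b) (coimp L a b')"
  using coimp_meet[of a b b'] leq_join1[of "coimp L a b" "coimp L a b'"] meet_comm[of b' b]
  unfolding leq_def by simp

lemma coimp_leq_coimp:
  "a \<in> K \<Longrightarrow> b \<in> K \<Longrightarrow> a' \<in> K \<Longrightarrow> b' \<in> K \<Longrightarrow> leq L a a' \<Longrightarrow> leq L b' b \<Longrightarrow>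
    leq L (coimp L a b) (coimp L a' b')"
  by (meson coimp_antimono coimp_closed coimp_mono leq_trans)


section \<open>Prime filters\<close>

definition lattice_filter :: "'a set \<Rightarrow> bool" where
  "lattice_filter F \<longleftrightarrow> F \<subseteq> K \<and> top L \<in> F \<and> (\<forall>x\<in>F. \<forall>y\<in>F. meet L x y \<in> F) \<and>
     (\<forall>x\<in>F. \<forall>y\<in>K. leq L x y \<longrightarrow> y \<in> F)"

definition prime_filter :: "'a set \<Rightarrow> bool" where
  "prime_filter P \<longleftrightarrow> lattice_filter P \<and> bot L \<notin> P \<and>
     (\<forall>x\<in>K. \<forall>y\<in>K. join L x y \<in> P \<longrightarrow> x \<in> P \<or> y \<in> P)"

lemma
  assumes "lattice_filter F"
  shows filter_subset: "x \<in> F \<Longrightarrow> x \<in> K"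
    and filter_top: "top L \<in> F"
    and filter_meet: "x \<in> F \<Longrightarrow> y \<in> F \<Longrightarrow> meet L x y \<in> F"
    and filter_up: "x \<in> F \<Longrightarrow> y \<in> K \<Longrightarrow> leq L x y \<Longrightarrow> y \<in> F"
  using assms unfolding lattice_filter_def by blast+

lemma
  assumes "prime_filter P"
  shows prime_filter_lattice_filter: "lattice_filter P"
    and prime_filter_bot: "bot L \<notin> P"
  using assms unfolding prime_filter_def by blast+

lemma
  assumes "prime_filter P"
  shows prime_filter_subset: "x \<in> P \<Longrightarrow> x \<in> K"
    and prime_filter_top: "top L \<in> P"
    and prime_filter_up: "x \<in> P \<Longrightarrow> y \<in> K \<Longrightarrow> leq L x y \<Longrightarrow> y \<in> P"
  using filter_subset filter_top filter_up prime_filter_lattice_filter[OF assms] by blast+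

lemma prime_filter_meet_iff:
  "prime_filter P \<Longrightarrow> x \<in> K \<Longrightarrow> y \<in> K \<Longrightarrow> meet L x y \<in> P \<longleftrightarrow> x \<in> P \<and> y \<in> P"
  by (meson prime_filter_lattice_filter filter_meet filter_up meet_leq1 meet_leq2 meet_closed)

lemma prime_filter_join_iff:
  "prime_filter P \<Longrightarrow> x \<in> K \<Longrightarrow> y \<in> K \<Longrightarrow> join L x y \<in> P \<longleftrightarrow> x \<in> P \<or> y \<in> P"
  unfolding prime_filter_def by (meson filter_up leq_join1 leq_join2 join_closed)

lemma lattice_filter_principal: "a \<in> K \<Longrightarrow> lattice_filter {x \<in> K. leq L a x}"
  unfolding lattice_filter_def by (auto intro: leq_top leq_meetI leq_trans)

lemma lattice_filter_Union_chain:
  assumes "C \<noteq> {}" "chain\<^sub>\<subseteq> C" "\<forall>G\<in>C. lattice_filter G"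
  shows "lattice_filter (\<Union>C)"
  unfolding lattice_filter_def
proof (intro conjI ballI impI)
  fix x y assume "x \<in> \<Union>C" "y \<in> \<Union>C"
  then obtain G where "G \<in> C" "x \<in> G" "y \<in> G"
    using assms(2) unfolding chain_subset_def by blast
  then show "meet L x y \<in> \<Union>C" using assms(3) filter_meet by blast
qed (use assms filter_subset filter_top filter_up in blast)+

definition filter_adjoin :: "'a set \<Rightarrow> 'a \<Rightarrow> 'a set" where
  "filter_adjoin G y = {z \<in> K. \<exists>g\<in>G. leq L (meet L g y) z}"

lemma lattice_filter_adjoin:
  assumes G: "lattice_filter G" and y: "y \<in> K"
  shows "lattice_filter (filter_adjoin G y)"
  unfolding lattice_filter_def
proof (intro conjI ballI impI)
  show "top L \<in> filter_adjoin G y"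
    using filter_top[OF G] y leq_top[of "meet L (top L) y"] unfolding filter_adjoin_def by auto
next
  fix u v assume "u \<in> filter_adjoin G y" "v \<in> filter_adjoin G y"
  then obtain g1 g2 where g: "g1 \<in> G" "g2 \<in> G" "u \<in> K" "v \<in> K"
    "leq L (meet L g1 y) u" "leq L (meet L g2 y) v"
    unfolding filter_adjoin_def by blast
  have gK: "g1 \<in> K" "g2 \<in> K" using g filter_subset[OF G] by auto
  let ?g = "meet L g1 g2"
  have "leq L (meet L ?g y) (meet L g1 y)" "leq L (meet L ?g y) (meet L g2 y)"
    using meet_mono[OF _ y _ y] meet_leq1 meet_leq2 leq_refl[OF y] gK by simp_all
  then have "leq L (meet L ?g y) (meet L u v)"
    using leq_meetI leq_trans g gK y by (meson meet_closed)
  then show "meet L u v \<in> filter_adjoin G y"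
    using filter_meet[OF G g(1,2)] g unfolding filter_adjoin_def by auto
next
  fix u v assume u: "u \<in> filter_adjoin G y" and v: "v \<in> K" "leq L u v"
  then obtain g where "g \<in> G" "u \<in> K" "leq L (meet L g y) u"
    unfolding filter_adjoin_def by blast
  then show "v \<in> filter_adjoin G y"
    using leq_trans[of "meet L g y" u v] filter_subset[OF G] y v unfolding filter_adjoin_def by auto
qed (auto simp: filter_adjoin_def)

lemma subset_filter_adjoin: "lattice_filter G \<Longrightarrow> y \<in> K \<Longrightarrow> G \<subseteq> filter_adjoin G y"
  unfolding filter_adjoin_def by (auto intro: meet_leq1 dest: filter_subset)

lemma mem_filter_adjoin: "lattice_filter G \<Longrightarrow> y \<in> K \<Longrightarrow> y \<in> filter_adjoin G y"
  unfolding filter_adjoin_def using filter_top meet_leq2[of "top L" y] by auto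


definition compatible :: "('a \<Rightarrow> 'a \<Rightarrow> bool) \<Rightarrow> bool" where
  "compatible S \<longleftrightarrow> (\<forall>x\<in>K. S x x) \<and>
     (\<forall>x\<in>K. \<forall>y\<in>K. \<forall>z\<in>K. S x y \<longrightarrow> S y z \<longrightarrow> S x z) \<and>
     (\<forall>x\<in>K. \<forall>y\<in>K. \<forall>x'\<in>K. \<forall>y'\<in>K. S x y \<longrightarrow> leq L x' x \<longrightarrow> leq L y y' \<longrightarrow> S x' y') \<and>
     (\<forall>x\<in>K. \<forall>y\<in>K. \<forall>x'\<in>K. \<forall>y'\<in>K. S x y \<longrightarrow> S x' y' \<longrightarrow> S (meet L x x') (meet L y y')) \<and>
     (\<forall>x\<in>K. \<forall>y\<in>K. \<forall>x'\<in>K. \<forall>y'\<in>K. S x y \<longrightarrow> S x' y' \<longrightarrow> S (join L x x') (join L y y'))"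

lemma
  assumes "compatible S"
  shows compatible_refl: "x \<in> K \<Longrightarrow> S x x"
    and compatible_trans: "x \<in> K \<Longrightarrow> y \<in> K \<Longrightarrow> z \<in> K \<Longrightarrow> S x y \<Longrightarrow> S y z \<Longrightarrow> S x z"
    and compatible_leq:
      "x \<in> K \<Longrightarrow> y \<in> K \<Longrightarrow> x' \<in> K \<Longrightarrow> y' \<in> K \<Longrightarrow> S x y \<Longrightarrow> leq L x' x \<Longrightarrow> leq L y y' \<Longrightarrow>
        S x' y'"
    and compatible_meet:
      "x \<in> K \<Longrightarrow> y \<in> K \<Longrightarrow> x' \<in> K \<Longrightarrow> y' \<in> K \<Longrightarrow> S x y \<Longrightarrow> S x' y' \<Longrightarrow>
        S (meet L x x') (meet L y y')"
    and compatible_join: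
      "x \<in> K \<Longrightarrow> y \<in> K \<Longrightarrow> x' \<in> K \<Longrightarrow> y' \<in> K \<Longrightarrow> S x y \<Longrightarrow> S x' y' \<Longrightarrow>
        S (join L x x') (join L y y')"
  using assms unfolding compatible_def by blast+

definition separated :: "('a \<Rightarrow> 'a \<Rightarrow> bool) \<Rightarrow> 'a set \<Rightarrow> 'a set \<Rightarrow> bool" where
  "separated S F I \<longleftrightarrow> (\<forall>x\<in>F. \<forall>y\<in>I. \<not> S x y)"

definition rel_closed :: "('a \<Rightarrow> 'a \<Rightarrow> bool) \<Rightarrow> 'a set \<Rightarrow> bool" where
  "rel_closed S P \<longleftrightarrow> (\<forall>x\<in>P. \<forall>y\<in>K. S x y \<longrightarrow> y \<in> P)"

definition maximal_separated :: "('a \<Rightarrow> 'a \<Rightarrow> bool) \<Rightarrow> 'a set \<Rightarrow> 'a set \<Rightarrow> bool" where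
  "maximal_separated S I M \<longleftrightarrow> lattice_filter M \<and> separated S M I \<and>
     (\<forall>G. lattice_filter G \<longrightarrow> M \<subseteq> G \<longrightarrow> separated S G I \<longrightarrow> G = M)"

lemma
  assumes "maximal_separated S I M"
  shows maximal_separated_filter: "lattice_filter M"
    and maximal_separated_separated: "separated S M I"
    and maximal_separated_maximal: "lattice_filter G \<Longrightarrow> M \<subseteq> G \<Longrightarrow> separated S G I \<Longrightarrow> G = M"
  using assms unfolding maximal_separated_def by blast+

lemma exists_maximal_separated:
  assumes "lattice_filter F" "separated S F I"
  obtains M where "maximal_separated S I M" "F \<subseteq> M"
proof -
  define \<G> where "\<G> = {G. lattice_filter G \<and> F \<subseteq> G \<and> separated S G I}"
  have "\<exists>U\<in>\<G>. \<forall>G\<in>C. G \<subseteq> U" if "C \<in> chains \<G>" for C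
  proof (cases "C = {}")
    case True
    then show ?thesis using assms unfolding \<G>_def by blast
  next
    case False
    have C: "C \<subseteq> \<G>" "chain\<^sub>\<subseteq> C" using that unfolding chains_def by auto
    have "lattice_filter (\<Union>C)"
      using lattice_filter_Union_chain[OF False C(2)] C(1) unfolding \<G>_def by blast
    moreover have "F \<subseteq> \<Union>C" using False C(1) unfolding \<G>_def by blast
    moreover have "separated S (\<Union>C) I" using C(1) unfolding \<G>_def separated_def by blast
    ultimately show ?thesis unfolding \<G>_def by blast
  qed
  then obtain M where M: "M \<in> \<G>" and max: "\<forall>G\<in>\<G>. M \<subseteq> G \<longrightarrow> G = M"
    using Zorn_Lemma2[of \<G>] by blast
  have "G = M" if "lattice_filter G" "M \<subseteq> G" "separated S G I" for G
    using max M that unfolding \<G>_def by blast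
  then have "maximal_separated S I M"
    using M unfolding \<G>_def maximal_separated_def by blast
  then show ?thesis using M that unfolding \<G>_def by blast
qed

lemma maximal_separated_escape:
  assumes S: "compatible S" and M: "maximal_separated S I M" and I: "I \<subseteq> K"
    and y: "y \<in> K" "y \<notin> M"
  shows "\<exists>g\<in>M. \<exists>z\<in>I. S (meet L g y) z"
proof (rule ccontr)
  assume none: "\<not> ?thesis"
  note M_filter = maximal_separated_filter[OF M]
  have "separated S (filter_adjoin M y) I"
    unfolding separated_def
  proof (intro ballI notI)
    fix x z assume x: "x \<in> filter_adjoin M y" and z: "z \<in> I" and "S x z"
    obtain g where g: "g \<in> M" "x \<in> K" "leq L (meet L g y) x"
      using x unfolding filter_adjoin_def by blast
    have "S (meet L g y) z"
      using compatible_leq[OF S g(2) _ _ _ \<open>S x z\<close> g(3) leq_refl] filter_subset[OF M_filter g(1)] y z I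
      by auto
    then show False using none g(1) z by blast
  qed
  then have "filter_adjoin M y = M"
    using maximal_separated_maximal[OF M lattice_filter_adjoin[OF M_filter y(1)]]
      subset_filter_adjoin[OF M_filter y(1)] by blast
  then show False using mem_filter_adjoin[OF M_filter y(1)] y(2) by blast
qed

lemma maximal_separated_join_prime:
  assumes S: "compatible S" and M: "maximal_separated S I M"
    and I: "I \<subseteq> K" "\<And>z z'. z \<in> I \<Longrightarrow> z' \<in> I \<Longrightarrow> join L z z' \<in> I"
    and xy: "x \<in> K" "y \<in> K" "join L x y \<in> M"
  shows "x \<in> M \<or> y \<in> M"
proof (rule ccontr)
  assume "\<not> (x \<in> M \<or> y \<in> M)"
  then obtain g1 z1 g2 z2 where gz: "g1 \<in> M" "z1 \<in> I" "S (meet L g1 x) z1"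
    "g2 \<in> M" "z2 \<in> I" "S (meet L g2 y) z2"
    using maximal_separated_escape[OF S M I(1)] xy by meson
  note M_filter = maximal_separated_filter[OF M]
  have K: "g1 \<in> K" "g2 \<in> K" "z1 \<in> K" "z2 \<in> K"
    using gz I(1) filter_subset[OF M_filter] by auto
  define g where "g = meet L g1 g2"
  have g: "g \<in> M" "g \<in> K" using filter_meet[OF M_filter gz(1,4)] K unfolding g_def by simp_all
  have "leq L (meet L g x) (meet L g1 x)"
    using meet_mono[OF g(2) xy(1) K(1) xy(1) _ leq_refl[OF xy(1)]] meet_leq1[OF K(1,2)]
    unfolding g_def by simp
  then have "S (meet L g x) z1"
    using compatible_leq[OF S meet_closed[OF K(1) xy(1)] K(3) meet_closed[OF g(2) xy(1)] K(3)
        gz(3) _ leq_refl[OF K(3)]] by blast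
  moreover have "leq L (meet L g y) (meet L g2 y)"
    using meet_mono[OF g(2) xy(2) K(2) xy(2) _ leq_refl[OF xy(2)]] meet_leq2[OF K(1,2)]
    unfolding g_def by simp
  then have "S (meet L g y) z2"
    using compatible_leq[OF S meet_closed[OF K(2) xy(2)] K(4) meet_closed[OF g(2) xy(2)] K(4)
        gz(6) _ leq_refl[OF K(4)]] by blast
  ultimately have "S (join L (meet L g x) (meet L g y)) (join L z1 z2)"
    using compatible_join[OF S meet_closed[OF g(2) xy(1)] K(3) meet_closed[OF g(2) xy(2)] K(4)]
    by blast
  then have "S (meet L g (join L x y)) (join L z1 z2)"
    using meet_join_distrib[OF g(2) xy(1,2)] by simp
  moreover have "meet L g (join L x y) \<in> M" using filter_meet[OF M_filter g(1) xy(3)] .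
  moreover have "join L z1 z2 \<in> I" using I(2) gz(2,5) .
  ultimately show False using maximal_separated_separated[OF M] unfolding separated_def by blast
qed

lemma maximal_separated_rel_closed:
  assumes S: "compatible S" and M: "maximal_separated S I M" and I: "I \<subseteq> K"
  shows "rel_closed S M"
  unfolding rel_closed_def
proof (intro ballI impI, rule ccontr)
  note M_filter = maximal_separated_filter[OF M]
  fix x y assume x: "x \<in> M" and y: "y \<in> K" "y \<notin> M" and "S x y"
  obtain g z where g: "g \<in> M" "z \<in> I" "S (meet L g y) z"
    using maximal_separated_escape[OF S M I y] by blast
  have K: "g \<in> K" "x \<in> K" "z \<in> K" using filter_subset[OF M_filter] g x I by auto
  have "S (meet L g x) (meet L g y)"
    using compatible_meet[OF S K(1) K(1) K(2) y(1) compatible_refl[OF S K(1)] \<open>S x y\<close>] .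
  then have "S (meet L g x) z"
    using compatible_trans[OF S _ _ K(3) _ g(3)] K y(1) by simp
  then show False
    using maximal_separated_separated[OF M] filter_meet[OF M_filter g(1) x] g(2)
    unfolding separated_def by blast
qed

theorem prime_filter_extension:
  assumes S: "compatible S" and F: "lattice_filter F" and sep: "separated S F I"
    and I: "I \<subseteq> K" "I \<noteq> {}" "\<And>z z'. z \<in> I \<Longrightarrow> z' \<in> I \<Longrightarrow> join L z z' \<in> I"
  obtains P where "prime_filter P" "F \<subseteq> P" "P \<inter> I = {}" "rel_closed S P"
proof -
  obtain M where M: "maximal_separated S I M" and FM: "F \<subseteq> M"
    using exists_maximal_separated[OF F sep] by blast
  note M_filter = maximal_separated_filter[OF M] and M_sep = maximal_separated_separated[OF M]
  note MK = filter_subset[OF M_filter]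
  have "rel_closed S M" using maximal_separated_rel_closed[OF S M I(1)] .
  moreover have "M \<inter> I = {}"
  proof -
    have "\<not> S x x" if "x \<in> M" "x \<in> I" for x
      using M_sep that unfolding separated_def by blast
    then show ?thesis using compatible_refl[OF S] MK by blast
  qed
  moreover have "bot L \<notin> M"
  proof
    assume "bot L \<in> M"
    obtain z where "z \<in> I" using I(2) by blast
    then have z: "z \<in> K" using I(1) by blast
    have "S (bot L) z"
      using compatible_leq[OF S z z bot_closed z compatible_refl[OF S z] bot_leq[OF z] leq_refl[OF z]] .
    then show False using M_sep \<open>bot L \<in> M\<close> \<open>z \<in> I\<close> unfolding separated_def by blast
  qed
  moreover have "prime_filter M"
    unfolding prime_filter_def
    using M_filter \<open>bot L \<notin> M\<close> maximal_separated_join_prime[OF S M I(1,3)] by blast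
  ultimately show ?thesis using that FM by blast
qed

lemma prime_filter_separating:
  assumes S: "compatible S" and ab: "a \<in> K" "b \<in> K" "\<not> S a b"
  obtains P where "prime_filter P" "a \<in> P" "b \<notin> P" "rel_closed S P"
proof -
  let ?I = "{y \<in> K. leq L y b}"
  have "separated S {x \<in> K. leq L a x} ?I"
    unfolding separated_def
  proof (intro ballI notI)
    fix x y assume "x \<in> {x \<in> K. leq L a x}" "y \<in> ?I" "S x y"
    then show False using compatible_leq[OF S _ _ ab(1,2)] ab(3) by blast
  qed
  moreover have "b \<in> ?I" using ab leq_refl by blast
  moreover have "join L y y' \<in> ?I" if "y \<in> ?I" "y' \<in> ?I" for y y'
    using that join_leqI ab(2) by simp
  ultimately obtain P where "prime_filter P" "{x \<in> K. leq L a x} \<subseteq> P" "P \<inter> ?I = {}" "rel_closed S P"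
    using prime_filter_extension[OF S lattice_filter_principal[OF ab(1)], of ?I] by blast
  then show ?thesis using that ab leq_refl by blast
qed

section \<open>The canonical frame\<close>

lemma compatible_leq_rel: "compatible (leq L)"
  unfolding compatible_def
proof (intro conjI ballI impI)
  fix x y x' y' assume K: "x \<in> K" "y \<in> K" "x' \<in> K" "y' \<in> K"
    and "leq L x y" "leq L x' x" "leq L y y'"
  then show "leq L x' y'" using leq_trans[OF K(3,1,2)] leq_trans[OF K(3,2,4)] by blast
next
  fix x y x' y' assume "x \<in> K" "y \<in> K" "x' \<in> K" "y' \<in> K" "leq L x y" "leq L x' y'"
  then show "leq L (meet L x x') (meet L y y')" "leq L (join L x x') (join L y y')"
    by (simp_all add: meet_mono join_mono)
qed (simp add: leq_refl, rule leq_trans)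

lemma compatible_imp_mem:
  assumes P: "prime_filter P"
  shows "compatible (\<lambda>x y. imp L x y \<in> P)"
  unfolding compatible_def
proof (intro conjI ballI impI)
  fix x assume "x \<in> K"
  then show "imp L x x \<in> P" using imp_refl prime_filter_top[OF P] by simp
next
  fix x y z assume K: "x \<in> K" "y \<in> K" "z \<in> K" and "imp L x y \<in> P" "imp L y z \<in> P"
  then have "meet L (imp L x y) (imp L y z) \<in> P" using prime_filter_meet_iff[OF P] by simp
  then show "imp L x z \<in> P" using prime_filter_up[OF P _ _ imp_trans[OF K]] K by simp
next
  fix x y x' y' assume K: "x \<in> K" "y \<in> K" "x' \<in> K" "y' \<in> K"
    and "imp L x y \<in> P" "leq L x' x" "leq L y y'"
  then show "imp L x' y' \<in> P" using prime_filter_up[OF P _ _ imp_leq_imp[OF K(1,2,3,4)]] by simp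
next
  fix x y x' y' assume K: "x \<in> K" "y \<in> K" "x' \<in> K" "y' \<in> K"
    and xy: "imp L x y \<in> P" and xy': "imp L x' y' \<in> P"
  have "imp L (meet L x x') y \<in> P"
    using prime_filter_up[OF P xy _ imp_antimono[OF K(1) _ K(2) meet_leq1[OF K(1,3)]]] K by simp
  moreover have "imp L (meet L x x') y' \<in> P"
    using prime_filter_up[OF P xy' _ imp_antimono[OF K(3) _ K(4) meet_leq2[OF K(1,3)]]] K by simp
  ultimately show "imp L (meet L x x') (meet L y y') \<in> P"
    using imp_meet[of "meet L x x'" y y'] prime_filter_meet_iff[OF P] K by simp
next
  fix x y x' y' assume K: "x \<in> K" "y \<in> K" "x' \<in> K" "y' \<in> K"
    and xy: "imp L x y \<in> P" and xy': "imp L x' y' \<in> P"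
  have "imp L x (join L y y') \<in> P"
    using prime_filter_up[OF P xy _ imp_mono[OF K(1,2) _ leq_join1[OF K(2,4)]]] K by simp
  moreover have "imp L x' (join L y y') \<in> P"
    using prime_filter_up[OF P xy' _ imp_mono[OF K(3,4) _ leq_join2[OF K(2,4)]]] K by simp
  ultimately show "imp L (join L x x') (join L y y') \<in> P"
    using imp_join[of x x' "join L y y'"] prime_filter_meet_iff[OF P] K by simp
qed

lemma compatible_coimp_not_mem:
  assumes P: "prime_filter P"
  shows "compatible (\<lambda>x y. coimp L x y \<notin> P)"
  unfolding compatible_def
proof (intro conjI ballI impI notI)
  fix x assume "x \<in> K" "coimp L x x \<in> P"
  then show False using coimp_refl prime_filter_bot[OF P] by simp
next
  fix x y z assume K: "x \<in> K" "y \<in> K" "z \<in> K" and "coimp L x y \<notin> P" "coimp L y z \<notin> P"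
    and "coimp L x z \<in> P"
  then have "join L (coimp L x y) (coimp L y z) \<in> P"
    using prime_filter_up[OF P _ _ coimp_trans[OF K]] K by simp
  then show False
    using prime_filter_join_iff[OF P] K \<open>coimp L x y \<notin> P\<close> \<open>coimp L y z \<notin> P\<close> by simp
next
  fix x y x' y' assume K: "x \<in> K" "y \<in> K" "x' \<in> K" "y' \<in> K"
    and "coimp L x y \<notin> P" "leq L x' x" "leq L y y'" "coimp L x' y' \<in> P"
  then show False using prime_filter_up[OF P _ _ coimp_leq_coimp[OF K(3,4,1,2)]] by simp
next
  fix x y x' y' assume K: "x \<in> K" "y \<in> K" "x' \<in> K" "y' \<in> K"
    and "coimp L x y \<notin> P" "coimp L x' y' \<notin> P" and meet: "coimp L (meet L x x') (meet L y y') \<in> P"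
  then have "coimp L (meet L x x') y \<in> P \<or> coimp L (meet L x x') y' \<in> P"
    using coimp_meet[of "meet L x x'" y y'] prime_filter_join_iff[OF P] K by simp
  then show False
    using prime_filter_up[OF P _ _ coimp_mono[OF _ K(1) K(2) meet_leq1[OF K(1,3)]]]
      prime_filter_up[OF P _ _ coimp_mono[OF _ K(3) K(4) meet_leq2[OF K(1,3)]]]
      \<open>coimp L x y \<notin> P\<close> \<open>coimp L x' y' \<notin> P\<close> K by auto
next
  fix x y x' y' assume K: "x \<in> K" "y \<in> K" "x' \<in> K" "y' \<in> K"
    and "coimp L x y \<notin> P" "coimp L x' y' \<notin> P" and join: "coimp L (join L x x') (join L y y') \<in> P"
  then have "coimp L x (join L y y') \<in> P \<or> coimp L x' (join L y y') \<in> P"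
    using coimp_join[of x x' "join L y y'"] prime_filter_join_iff[OF P] K by simp
  then show False
    using prime_filter_up[OF P _ _ coimp_antimono[OF K(1) _ K(2) leq_join1[OF K(2,4)]]]
      prime_filter_up[OF P _ _ coimp_antimono[OF K(3) _ K(4) leq_join2[OF K(2,4)]]]
      \<open>coimp L x y \<notin> P\<close> \<open>coimp L x' y' \<notin> P\<close> K by auto
qed

definition prime_filters :: "'a set set" where
  "prime_filters = {P. prime_filter P}"

definition canonical_rel :: "'a set \<Rightarrow> 'a set \<Rightarrow> bool" where
  "canonical_rel P P' \<longleftrightarrow> (\<forall>a\<in>K. \<forall>b\<in>K. imp L a b \<in> P \<longrightarrow> a \<in> P' \<longrightarrow> b \<in> P')"

definition stone :: "'a \<Rightarrow> 'a set set" where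
  "stone a = {P. prime_filter P \<and> a \<in> P}"

lemma imp_mem_iff:
  assumes P: "prime_filter P" and ab: "a \<in> K" "b \<in> K"
  shows "imp L a b \<in> P \<longleftrightarrow> (\<forall>P'. prime_filter P' \<longrightarrow> canonical_rel P P' \<longrightarrow> a \<in> P' \<longrightarrow> b \<in> P')"
proof
  assume "imp L a b \<in> P"
  then show "\<forall>P'. prime_filter P' \<longrightarrow> canonical_rel P P' \<longrightarrow> a \<in> P' \<longrightarrow> b \<in> P'"
    unfolding canonical_rel_def using ab by blast
next
  assume all: "\<forall>P'. prime_filter P' \<longrightarrow> canonical_rel P P' \<longrightarrow> a \<in> P' \<longrightarrow> b \<in> P'"
  show "imp L a b \<in> P"
  proof (rule ccontr)
    assume "imp L a b \<notin> P"
    then obtain P' where "prime_filter P'" "a \<in> P'" "b \<notin> P'" "rel_closed (\<lambda>x y. imp L x y \<in> P) P'"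
      using prime_filter_separating[OF compatible_imp_mem[OF P] ab] by blast
    moreover from this have "canonical_rel P P'"
      unfolding rel_closed_def canonical_rel_def by blast
    ultimately show False using all by blast
  qed
qed

lemma coimp_mem_of_canonical_rel:
  assumes P: "prime_filter P" and P': "prime_filter P'" and "canonical_rel P' P"
    and a: "a \<in> P'" and b: "b \<in> K" "b \<notin> P'"
  shows "coimp L a b \<in> P"
proof -
  have aK: "a \<in> K" using prime_filter_subset[OF P' a] .
  have "join L b (imp L (top L) (coimp L a b)) \<in> P'"
    using prime_filter_up[OF P' a _ leq_join_imp_top_coimp[OF aK b(1)]] aK b(1) by simp
  then have "imp L (top L) (coimp L a b) \<in> P'"
    using prime_filter_join_iff[OF P'] aK b by simp
  then show ?thesis
    using \<open>canonical_rel P' P\<close> prime_filter_top[OF P] top_closed coimp_closed[OF aK b(1)]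
    unfolding canonical_rel_def by blast
qed

lemma canonical_rel_if_rel_closed_coimp:
  assumes P: "prime_filter P" and P': "prime_filter P'"
    and closed: "rel_closed (\<lambda>x y. coimp L x y \<notin> P) P'"
  shows "canonical_rel P' P"
  unfolding canonical_rel_def
proof (intro ballI impI)
  fix a b assume ab: "a \<in> K" "b \<in> K" and "imp L a b \<in> P'" "a \<in> P"
  then have "coimp L (imp L a b) (bot L) \<in> P"
    using closed prime_filter_bot[OF P'] bot_closed unfolding rel_closed_def by blast
  then have "meet L a (coimp L (imp L a b) (bot L)) \<in> P"
    using prime_filter_meet_iff[OF P] \<open>a \<in> P\<close> ab by simp
  then show "b \<in> P" using prime_filter_up[OF P _ _ meet_coimp_imp_bot[OF ab]] ab by simp
qed

lemma coimp_mem_iff: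
  assumes P: "prime_filter P" and ab: "a \<in> K" "b \<in> K"
  shows "coimp L a b \<in> P \<longleftrightarrow> (\<exists>P'. prime_filter P' \<and> canonical_rel P' P \<and> a \<in> P' \<and> b \<notin> P')"
proof
  assume "coimp L a b \<in> P"
  then obtain P' where "prime_filter P'" "a \<in> P'" "b \<notin> P'" "rel_closed (\<lambda>x y. coimp L x y \<notin> P) P'"
    using prime_filter_separating[OF compatible_coimp_not_mem[OF P] ab] by blast
  then show "\<exists>P'. prime_filter P' \<and> canonical_rel P' P \<and> a \<in> P' \<and> b \<notin> P'"
    using canonical_rel_if_rel_closed_coimp[OF P] by blast
next
  assume "\<exists>P'. prime_filter P' \<and> canonical_rel P' P \<and> a \<in> P' \<and> b \<notin> P'"
  then show "coimp L a b \<in> P" using coimp_mem_of_canonical_rel[OF P] ab by blast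
qed

lemma leq_if_stone_subset:
  assumes "a \<in> K" "b \<in> K" "stone a \<subseteq> stone b"
  shows "leq L a b"
proof (rule ccontr)
  assume "\<not> leq L a b"
  then obtain P where "prime_filter P" "a \<in> P" "b \<notin> P"
    using prime_filter_separating[OF compatible_leq_rel assms(1,2)] by blast
  then show False using assms(3) unfolding stone_def by blast
qed

lemma inj_on_stone: "inj_on stone K"
  by (rule inj_onI) (simp add: leq_antisym leq_if_stone_subset)

theorem frame_embedding_stone: "frame_embedding prime_filters canonical_rel L stone"
  unfolding frame_embedding_def
proof (intro conjI ballI)
  fix a b assume ab: "a \<in> K" "b \<in> K"
  show "stone (meet L a b) = stone a \<inter> stone b"
    unfolding stone_def using prime_filter_meet_iff ab by auto
  show "stone (join L a b) = stone a \<union> stone b"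
    unfolding stone_def using prime_filter_join_iff ab by auto
  show "stone (imp L a b) = frame_imp prime_filters canonical_rel (stone a) (stone b)"
    unfolding stone_def frame_imp_def prime_filters_def using imp_mem_iff ab by auto
  show "stone (coimp L a b) = frame_coimp prime_filters canonical_rel (stone a) (stone b)"
    unfolding stone_def frame_coimp_def prime_filters_def using coimp_mem_iff ab by auto
qed (auto simp: stone_def prime_filters_def inj_on_stone prime_filter_bot prime_filter_top)

end

section \<open>Duals of embeddings\<close>

locale whb_embedding = A: whb A + B: whb B
  for A :: "('a, 'm) whb_alg_scheme" and B :: "('b, 'n) whb_alg_scheme" +
  fixes i :: "'a \<Rightarrow> 'b"
  assumes embedding: "whb_emb A B i"
begin

lemma i_closed: "a \<in> carrier A \<Longrightarrow> i a \<in> carrier B"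
  using embedding unfolding whb_emb_def whb_hom_def by blast

lemma
  assumes "a \<in> carrier A" "b \<in> carrier A"
  shows i_meet: "i (meet A a b) = meet B (i a) (i b)"
    and i_join: "i (join A a b) = join B (i a) (i b)"
    and i_imp: "i (imp A a b) = imp B (i a) (i b)"
    and i_coimp: "i (coimp A a b) = coimp B (i a) (i b)"
  using embedding assms unfolding whb_emb_def whb_hom_def by blast+

lemma
  shows i_bot: "i (bot A) = bot B"
    and i_top: "i (top A) = top B"
    and inj_on_i: "inj_on i (carrier A)"
  using embedding unfolding whb_emb_def whb_hom_def by blast+

lemma i_leq_iff: "a \<in> carrier A \<Longrightarrow> b \<in> carrier A \<Longrightarrow> leq B (i a) (i b) \<longleftrightarrow> leq A a b"
  unfolding leq_def using i_meet inj_onD[OF inj_on_i] by (metis A.meet_closed)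

definition dual :: "'b set \<Rightarrow> 'a set" where
  "dual P = {a \<in> carrier A. i a \<in> P}"

lemma prime_filter_dual:
  assumes P: "B.prime_filter P"
  shows "A.prime_filter (dual P)"
  unfolding A.prime_filter_def A.lattice_filter_def
proof (intro conjI ballI impI)
  show "top A \<in> dual P" unfolding dual_def using i_top B.prime_filter_top[OF P] by simp
  show "bot A \<notin> dual P" unfolding dual_def using i_bot B.prime_filter_bot[OF P] by simp
next
  fix x y assume "x \<in> dual P" "y \<in> dual P"
  then show "meet A x y \<in> dual P" unfolding dual_def using i_meet B.prime_filter_meet_iff[OF P] i_closed by simp
next
  fix x y assume "x \<in> dual P" "y \<in> carrier A" "leq A x y"
  then show "y \<in> dual P"
    unfolding dual_def using i_leq_iff[of x y] B.prime_filter_up[OF P, of "i x" "i y"] i_closed by auto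
next
  fix x y assume "x \<in> carrier A" "y \<in> carrier A" "join A x y \<in> dual P"
  then show "x \<in> dual P \<or> y \<in> dual P"
    unfolding dual_def using i_join B.prime_filter_join_iff[OF P] i_closed by simp
qed (auto simp: dual_def)

lemma lattice_filter_upclosure_image:
  assumes F: "A.lattice_filter F"
  shows "B.lattice_filter {x \<in> carrier B. \<exists>a\<in>F. leq B (i a) x}"
  unfolding B.lattice_filter_def
proof (intro conjI ballI impI)
  show "top B \<in> {x \<in> carrier B. \<exists>a\<in>F. leq B (i a) x}"
    using A.filter_top[OF F] i_top B.leq_refl[of "top B"] by force
next
  fix x y assume "x \<in> {x \<in> carrier B. \<exists>a\<in>F. leq B (i a) x}" "y \<in> {x \<in> carrier B. \<exists>a\<in>F. leq B (i a) x}"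
  then obtain a b where ab: "a \<in> F" "b \<in> F" and xy: "x \<in> carrier B" "y \<in> carrier B"
    "leq B (i a) x" "leq B (i b) y"
    by blast
  have K: "a \<in> carrier A" "b \<in> carrier A" using A.filter_subset[OF F] ab by auto
  have "leq B (i (meet A a b)) (meet B x y)"
    using i_meet[OF K] B.meet_mono[OF i_closed[OF K(1)] i_closed[OF K(2)] xy] by simp
  then show "meet B x y \<in> {x \<in> carrier B. \<exists>a\<in>F. leq B (i a) x}"
    using A.filter_meet[OF F ab] xy by auto
next
  fix x y assume "x \<in> {x \<in> carrier B. \<exists>a\<in>F. leq B (i a) x}" and y: "y \<in> carrier B" "leq B x y"
  then obtain a where "a \<in> F" "x \<in> carrier B" "leq B (i a) x" by blast
  moreover have "i a \<in> carrier B" using i_closed A.filter_subset[OF F] \<open>a \<in> F\<close> by blast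
  ultimately show "y \<in> {x \<in> carrier B. \<exists>a\<in>F. leq B (i a) x}"
    using B.leq_trans[of "i a" x y] y by blast
qed blast

lemma prime_filter_lift:
  assumes S: "B.compatible S" and F: "A.prime_filter F"
    and sep: "\<And>a e x y. a \<in> F \<Longrightarrow> e \<in> carrier A - F \<Longrightarrow> x \<in> carrier B \<Longrightarrow> y \<in> carrier B \<Longrightarrow>
      leq B (i a) x \<Longrightarrow> leq B y (i e) \<Longrightarrow> \<not> S x y"
  obtains P where "B.prime_filter P" "dual P = F" "B.rel_closed S P"
proof -
  let ?F = "{x \<in> carrier B. \<exists>a\<in>F. leq B (i a) x}"
  let ?I = "{y \<in> carrier B. \<exists>e\<in>carrier A - F. leq B y (i e)}"
  have F_filter: "A.lattice_filter F" using A.prime_filter_lattice_filter[OF F] .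
  have "i (bot A) \<in> ?I"
    using A.prime_filter_bot[OF F] i_closed[OF A.bot_closed] B.leq_refl A.bot_closed by blast
  moreover have "join B y y' \<in> ?I" if yI: "y \<in> ?I" "y' \<in> ?I" for y y'
  proof -
    obtain e e' where e: "e \<in> carrier A - F" "e' \<in> carrier A - F" and y: "y \<in> carrier B" "y' \<in> carrier B"
      "leq B y (i e)" "leq B y' (i e')"
      using yI by blast
    have "leq B (join B y y') (i (join A e e'))"
      using i_join B.join_mono[OF y(1,2) i_closed i_closed y(3,4)] e by simp
    moreover have "join A e e' \<in> carrier A - F" using A.prime_filter_join_iff[OF F] e by simp
    ultimately show ?thesis using y by auto
  qed
  moreover have "B.separated S ?F ?I" unfolding B.separated_def using sep by blast
  ultimately obtain P where P: "B.prime_filter P" "?F \<subseteq> P" "P \<inter> ?I = {}" "B.rel_closed S P"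
    using B.prime_filter_extension[OF S lattice_filter_upclosure_image[OF F_filter], of ?I] by blast
  have "dual P = F"
  proof
    show "dual P \<subseteq> F"
      using P(3) B.leq_refl i_closed unfolding dual_def by blast
    show "F \<subseteq> dual P"
      using P(2) B.leq_refl i_closed A.filter_subset[OF F_filter] unfolding dual_def by blast
  qed
  then show ?thesis using that P(1,4) by blast
qed

lemma dual_surj:
  assumes F: "A.prime_filter F"
  obtains P where "B.prime_filter P" "dual P = F"
proof -
  have "\<not> leq B x y" if "a \<in> F" "e \<in> carrier A - F" "x \<in> carrier B" "y \<in> carrier B"
    "leq B (i a) x" "leq B y (i e)" for a e x y
  proof
    assume "leq B x y"
    have a: "a \<in> carrier A" using A.prime_filter_subset[OF F that(1)] .
    have ie: "i a \<in> carrier B" "i e \<in> carrier B" using a that(2) i_closed by auto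
    have "leq B (i a) y" using B.leq_trans[OF ie(1) that(3,4) that(5) \<open>leq B x y\<close>] .
    then have "leq B (i a) (i e)" using B.leq_trans[OF ie(1) that(4) ie(2) _ that(6)] by blast
    then have "leq A a e" using i_leq_iff a that(2) by simp
    then show False using A.prime_filter_up[OF F that(1)] that(2) by blast
  qed
  then show ?thesis using prime_filter_lift[OF B.compatible_leq_rel F] that by blast
qed

lemma canonical_rel_dual:
  assumes "B.canonical_rel P P'"
  shows "A.canonical_rel (dual P) (dual P')"
  using assms i_closed i_imp unfolding A.canonical_rel_def B.canonical_rel_def dual_def by auto

lemma canonical_rel_dual_back:
  assumes P: "B.prime_filter P" and F: "A.prime_filter F" and "A.canonical_rel (dual P) F"
  obtains P' where "B.prime_filter P'" "B.canonical_rel P P'" "dual P' = F"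
proof -
  have "imp B x y \<notin> P" if "a \<in> F" "e \<in> carrier A - F" "x \<in> carrier B" "y \<in> carrier B"
    "leq B (i a) x" "leq B y (i e)" for a e x y
  proof
    assume "imp B x y \<in> P"
    have a: "a \<in> carrier A" using A.prime_filter_subset[OF F that(1)] .
    have "imp B (i a) (i e) \<in> P"
      using B.prime_filter_up[OF P \<open>imp B x y \<in> P\<close> _ B.imp_leq_imp[OF that(3,4)]] that a i_closed
      by simp
    then have "imp A a e \<in> dual P" unfolding dual_def using i_imp a that(2) by simp
    then show False
      using \<open>A.canonical_rel (dual P) F\<close> a that(1,2) unfolding A.canonical_rel_def by blast
  qed
  then obtain P' where "B.prime_filter P'" "dual P' = F" "B.rel_closed (\<lambda>x y. imp B x y \<in> P) P'"
    using prime_filter_lift[OF B.compatible_imp_mem[OF P] F] by blast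
  moreover from this have "B.canonical_rel P P'"
    unfolding B.rel_closed_def B.canonical_rel_def by blast
  ultimately show ?thesis using that by blast
qed

lemma canonical_rel_dual_back_converse:
  assumes P: "B.prime_filter P" and F: "A.prime_filter F" and "A.canonical_rel F (dual P)"
  obtains P' where "B.prime_filter P'" "B.canonical_rel P' P" "dual P' = F"
proof -
  have "coimp B x y \<in> P" if "a \<in> F" "e \<in> carrier A - F" "x \<in> carrier B" "y \<in> carrier B"
    "leq B (i a) x" "leq B y (i e)" for a e x y
  proof -
    have a: "a \<in> carrier A" using A.prime_filter_subset[OF F that(1)] .
    have "coimp A a e \<in> dual P"
      using A.coimp_mem_of_canonical_rel[OF prime_filter_dual[OF P] F \<open>A.canonical_rel F (dual P)\<close>]
        that(1,2) by blast
    then have "coimp B (i a) (i e) \<in> P" unfolding dual_def using i_coimp a that(2) by simp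
    then show ?thesis
      using B.prime_filter_up[OF P _ _ B.coimp_leq_coimp[OF _ _ that(3,4)]] that a i_closed by simp
  qed
  then obtain P' where "B.prime_filter P'" "dual P' = F" "B.rel_closed (\<lambda>x y. coimp B x y \<notin> P) P'"
    using prime_filter_lift[OF B.compatible_coimp_not_mem[OF P] F] by blast
  then show ?thesis using B.canonical_rel_if_rel_closed_coimp[OF P] that by blast
qed

lemma mem_stone_i_iff: "a \<in> carrier A \<Longrightarrow> P \<in> B.stone (i a) \<longleftrightarrow> B.prime_filter P \<and> a \<in> dual P"
  unfolding B.stone_def dual_def by simp

theorem bounded_morphism_dual:
  "bounded_morphism B.prime_filters B.canonical_rel A.prime_filters A.canonical_rel dual"
  unfolding bounded_morphism_def
proof (intro conjI ballI impI)
  show "dual ` B.prime_filters \<subseteq> A.prime_filters"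
    using prime_filter_dual unfolding A.prime_filters_def B.prime_filters_def by blast
next
  fix P P' assume "B.canonical_rel P P'"
  then show "A.canonical_rel (dual P) (dual P')" by (rule canonical_rel_dual)
next
  fix P F assume "P \<in> B.prime_filters" "F \<in> A.prime_filters" "A.canonical_rel (dual P) F"
  then obtain P' where "B.prime_filter P'" "B.canonical_rel P P'" "dual P' = F"
    using canonical_rel_dual_back unfolding A.prime_filters_def B.prime_filters_def by blast
  then show "\<exists>P'\<in>B.prime_filters. B.canonical_rel P P' \<and> dual P' = F"
    unfolding B.prime_filters_def by blast
next
  fix P F assume "P \<in> B.prime_filters" "F \<in> A.prime_filters" "A.canonical_rel F (dual P)"
  then obtain P' where "B.prime_filter P'" "B.canonical_rel P' P" "dual P' = F"
    using canonical_rel_dual_back_converse unfolding A.prime_filters_def B.prime_filters_def by blast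
  then show "\<exists>P'\<in>B.prime_filters. B.canonical_rel P' P \<and> dual P' = F"
    unfolding B.prime_filters_def by blast
qed

lemma dual_image: "dual ` B.prime_filters = A.prime_filters"
proof
  show "dual ` B.prime_filters \<subseteq> A.prime_filters"
    using prime_filter_dual unfolding A.prime_filters_def B.prime_filters_def by blast
  show "A.prime_filters \<subseteq> dual ` B.prime_filters"
  proof
    fix F assume "F \<in> A.prime_filters"
    then obtain P where "B.prime_filter P" "dual P = F"
      using dual_surj unfolding A.prime_filters_def by blast
    then show "F \<in> dual ` B.prime_filters" unfolding B.prime_filters_def by blast
  qed
qed

end

section \<open>Coding the generated subalgebra\<close>

locale frame_generated =
  fixes W :: "'w set" and R :: "'w \<Rightarrow> 'w \<Rightarrow> bool" and gen :: "'g \<Rightarrow> 'w set"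
  assumes gen_subset: "gen x \<subseteq> W"
begin

inductive_set generated :: "'w set set" where
  gen: "gen x \<in> generated"
| empty: "{} \<in> generated"
| whole: "W \<in> generated"
| Int: "U \<in> generated \<Longrightarrow> V \<in> generated \<Longrightarrow> U \<inter> V \<in> generated"
| Un: "U \<in> generated \<Longrightarrow> V \<in> generated \<Longrightarrow> U \<union> V \<in> generated"
| imp: "U \<in> generated \<Longrightarrow> V \<in> generated \<Longrightarrow> frame_imp W R U V \<in> generated"
| coimp: "U \<in> generated \<Longrightarrow> V \<in> generated \<Longrightarrow> frame_coimp W R U V \<in> generated"

lemma generated_subset: "U \<in> generated \<Longrightarrow> U \<subseteq> W"
  by (induction rule: generated.induct)
    (use gen_subset in \<open>auto simp: frame_imp_def frame_coimp_def\<close>)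

text \<open>Generated sets are named by words in reverse Polish notation. A symbol that would
  underflow the stack is skipped, and a word leaving the stack empty evaluates to the unspecified
  \<open>hd []\<close>; neither matters, since only codes of generated sets are ever evaluated.\<close>

definition rpn_op :: "nat \<Rightarrow> 'w set \<Rightarrow> 'w set \<Rightarrow> 'w set" where
  "rpn_op n U V = (if n = 0 then U \<inter> V else if n = 1 then U \<union> V
     else if n = 2 then frame_imp W R U V else frame_coimp W R U V)"

fun rpn_step :: "'w set list \<Rightarrow> 'g + nat \<Rightarrow> 'w set list" where
  "rpn_step st (Inl x) = gen x # st"
| "rpn_step st (Inr 0) = {} # st"
| "rpn_step st (Inr (Suc 0)) = W # st"
| "rpn_step (V # U # st) (Inr (Suc (Suc n))) = rpn_op n U V # st"
| "rpn_step st (Inr (Suc (Suc n))) = st"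

definition rpn_eval :: "('g + nat) list \<Rightarrow> 'w set" where
  "rpn_eval xs = hd (foldl rpn_step [] xs)"

definition rpn_code :: "'w set \<Rightarrow> ('g + nat) list" where
  "rpn_code U = (SOME xs. rpn_eval xs = U)"

lemma rpn_word_exists: "U \<in> generated \<Longrightarrow> \<exists>xs. \<forall>st. foldl rpn_step st xs = U # st"
proof (induction rule: generated.induct)
  case (gen x)
  show ?case by (rule exI[of _ "[Inl x]"]) simp
next
  case empty
  show ?case by (rule exI[of _ "[Inr 0]"]) simp
next
  case whole
  show ?case by (rule exI[of _ "[Inr 1]"]) simp
next
  case (Int U V)
  then obtain xs ys where "\<forall>st. foldl rpn_step st xs = U # st" "\<forall>st. foldl rpn_step st ys = V # st"
    by blast
  then show ?case by (intro exI[of _ "xs @ ys @ [Inr 2]"]) (simp add: rpn_op_def numeral_2_eq_2)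
next
  case (Un U V)
  then obtain xs ys where "\<forall>st. foldl rpn_step st xs = U # st" "\<forall>st. foldl rpn_step st ys = V # st"
    by blast
  then show ?case by (intro exI[of _ "xs @ ys @ [Inr 3]"]) (simp add: rpn_op_def numeral_3_eq_3)
next
  case (imp U V)
  then obtain xs ys where "\<forall>st. foldl rpn_step st xs = U # st" "\<forall>st. foldl rpn_step st ys = V # st"
    by blast
  then show ?case by (intro exI[of _ "xs @ ys @ [Inr 4]"]) (simp add: rpn_op_def eval_nat_numeral)
next
  case (coimp U V)
  then obtain xs ys where "\<forall>st. foldl rpn_step st xs = U # st" "\<forall>st. foldl rpn_step st ys = V # st"
    by blast
  then show ?case by (intro exI[of _ "xs @ ys @ [Inr 5]"]) (simp add: rpn_op_def eval_nat_numeral)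
qed

lemma rpn_eval_code [simp]: "U \<in> generated \<Longrightarrow> rpn_eval (rpn_code U) = U"
proof -
  assume "U \<in> generated"
  then obtain xs where "\<forall>st. foldl rpn_step st xs = U # st" using rpn_word_exists by blast
  then have "rpn_eval xs = U" unfolding rpn_eval_def by simp
  then show ?thesis unfolding rpn_code_def by (rule someI)
qed

lemma rpn_code_eq_iff [simp]: "U \<in> generated \<Longrightarrow> V \<in> generated \<Longrightarrow> rpn_code U = rpn_code V \<longleftrightarrow> U = V"
  by (metis rpn_eval_code)

definition coded_alg :: "('g + nat) list whb_alg" where
  "coded_alg = \<lparr>carrier = rpn_code ` generated,
     meet = \<lambda>x y. rpn_code (rpn_eval x \<inter> rpn_eval y),
     join = \<lambda>x y. rpn_code (rpn_eval x \<union> rpn_eval y),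
     imp = \<lambda>x y. rpn_code (frame_imp W R (rpn_eval x) (rpn_eval y)),
     coimp = \<lambda>x y. rpn_code (frame_coimp W R (rpn_eval x) (rpn_eval y)),
     bot = rpn_code {}, top = rpn_code W\<rparr>"

lemma coded_alg_simps [simp]:
  "carrier coded_alg = rpn_code ` generated"
  "meet coded_alg x y = rpn_code (rpn_eval x \<inter> rpn_eval y)"
  "join coded_alg x y = rpn_code (rpn_eval x \<union> rpn_eval y)"
  "imp coded_alg x y = rpn_code (frame_imp W R (rpn_eval x) (rpn_eval y))"
  "coimp coded_alg x y = rpn_code (frame_coimp W R (rpn_eval x) (rpn_eval y))"
  "bot coded_alg = rpn_code {}"
  "top coded_alg = rpn_code W"
  unfolding coded_alg_def by simp_all

lemma leq_coded_alg_iff [simp]: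
  "U \<in> generated \<Longrightarrow> V \<in> generated \<Longrightarrow> leq coded_alg (rpn_code U) (rpn_code V) \<longleftrightarrow> U \<subseteq> V"
  unfolding leq_def using generated.Int[of U V] by auto

theorem whb_algebra_coded_alg: "whb_algebra coded_alg"
  unfolding whb_algebra_def
  using generated_subset
  by (simp add: generated.intros Int_ac Un_ac Int_Un_distrib Un_absorb1 Un_absorb2 Int_absorb1 Int_absorb2
      frame_imp_refl frame_imp_Int frame_imp_Un frame_imp_trans frame_coimp_refl frame_coimp_Un
      frame_coimp_Int frame_coimp_trans Int_frame_coimp_frame_imp_subset subset_Un_frame_imp_frame_coimp)

theorem whb_emb_coded_alg:
  assumes g: "frame_embedding W R L g" and gen: "g ` carrier L \<subseteq> generated"
  shows "whb_emb L coded_alg (\<lambda>a. rpn_code (g a))"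
proof -
  have inj: "inj_on g (carrier L)" and bot: "g (bot L) = {}" and top: "g (top L) = W"
    and ops: "\<And>a b. a \<in> carrier L \<Longrightarrow> b \<in> carrier L \<Longrightarrow>
      g (meet L a b) = g a \<inter> g b \<and> g (join L a b) = g a \<union> g b \<and>
      g (imp L a b) = frame_imp W R (g a) (g b) \<and> g (coimp L a b) = frame_coimp W R (g a) (g b)"
    using g unfolding frame_embedding_def by blast+
  have gen_in: "g a \<in> generated" if "a \<in> carrier L" for a using gen that by blast
  then have "inj_on (\<lambda>a. rpn_code (g a)) (carrier L)"
    using inj unfolding inj_on_def by simp
  then show ?thesis
    unfolding whb_emb_def whb_hom_def using gen_in ops by (simp add: bot top)
qed

end

section \<open>Amalgamation\<close>

locale whb_span = AB: whb_embedding A B i + AC: whb_embedding A C j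
  for A :: "('a, 'm) whb_alg_scheme" and B :: "('b, 'n) whb_alg_scheme"
    and C :: "('c, 'o) whb_alg_scheme" and i :: "'a \<Rightarrow> 'b" and j :: "'a \<Rightarrow> 'c"
begin

definition amalgam_frame :: "('b set \<times> 'c set) set" where
  "amalgam_frame = pullback AB.B.prime_filters AC.B.prime_filters AB.dual AC.dual"

abbreviation amalgam_rel :: "'b set \<times> 'c set \<Rightarrow> 'b set \<times> 'c set \<Rightarrow> bool" where
  "amalgam_rel \<equiv> rel_prod AB.B.canonical_rel AC.B.canonical_rel"

definition left_emb :: "'b \<Rightarrow> ('b set \<times> 'c set) set" where
  "left_emb b = amalgam_frame \<inter> fst -` AB.B.stone b"

definition right_emb :: "'c \<Rightarrow> ('b set \<times> 'c set) set" where
  "right_emb c = amalgam_frame \<inter> snd -` AC.B.stone c"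

lemma frame_embedding_left_emb: "frame_embedding amalgam_frame amalgam_rel B left_emb"
  unfolding left_emb_def amalgam_frame_def using AB.dual_image AC.dual_image
    frame_embedding_vimage[OF AB.B.frame_embedding_stone
      bounded_morphism_pullback_fst[OF AB.bounded_morphism_dual AC.bounded_morphism_dual] fst_pullback]
  by simp

lemma frame_embedding_right_emb: "frame_embedding amalgam_frame amalgam_rel C right_emb"
  unfolding right_emb_def amalgam_frame_def using AB.dual_image AC.dual_image
    frame_embedding_vimage[OF AC.B.frame_embedding_stone
      bounded_morphism_pullback_snd[OF AB.bounded_morphism_dual AC.bounded_morphism_dual] snd_pullback]
  by simp

lemma left_emb_i_eq_right_emb_j:
  assumes a: "a \<in> carrier A"
  shows "left_emb (i a) = right_emb (j a)"
proof -
  have "fst z \<in> AB.B.stone (i a) \<longleftrightarrow> snd z \<in> AC.B.stone (j a)" if "z \<in> amalgam_frame" for z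
    using that AB.mem_stone_i_iff[OF a] AC.mem_stone_i_iff[OF a]
    unfolding amalgam_frame_def pullback_def AB.B.prime_filters_def AC.B.prime_filters_def by auto
  then show ?thesis unfolding left_emb_def right_emb_def by blast
qed

end

theorem corollary6p26:
  fixes A :: "'a whb_alg" and B :: "'b whb_alg" and C :: "'c whb_alg"
    and i :: "'a \<Rightarrow> 'b" and j :: "'a \<Rightarrow> 'c"
  assumes "whb_algebra A" and "whb_algebra B" and "whb_algebra C"
    and "whb_emb A B i" and "whb_emb A C j"
  shows "\<exists>(D :: ((('b + 'c) + nat) list) whb_alg) h k.
           whb_algebra D \<and> whb_emb B D h \<and> whb_emb C D k \<and>
           (\<forall>a\<in>carrier A. h (i a) = k (j a))"
proof -
  interpret whb_span A B C i j by unfold_locales (use assms in blast)+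
  interpret frame_generated amalgam_frame amalgam_rel "case_sum left_emb right_emb"
    by unfold_locales (auto simp: left_emb_def right_emb_def split: sum.split)
  have "left_emb ` carrier B \<subseteq> generated" "right_emb ` carrier C \<subseteq> generated"
    using generated.gen[of "Inl _"] generated.gen[of "Inr _"] by auto
  then have "whb_emb B coded_alg (\<lambda>b. rpn_code (left_emb b))"
    and "whb_emb C coded_alg (\<lambda>c. rpn_code (right_emb c))"
    using whb_emb_coded_alg frame_embedding_left_emb frame_embedding_right_emb by blast+
  then show ?thesis
    using whb_algebra_coded_alg left_emb_i_eq_right_emb_j by fastforce
qed

end
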